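(* For all integers $n \geq 3$ and $r \geq 3$, the graphs $K_n$ and $K_n + K_{n-1}$ are $r$-Ramsey equivalent; that is, a graph $G$ has the property that every edge-colouring of $G$ with $r$ colours contains a monochromatic copy of $K_n$ if and only if every edge-colouring of $G$ with $r$ colours contains a monochromatic copy of $K_n + K_{n-1}$.
   Context: All graphs are finite and simple. $K_m$ denotes the complete graph on $m$ vertices, and $K_n + K_{n-1}$ denotes the vertex-disjoint union of a copy of $K_n$ and a copy of $K_{n-1}$. For an integer $r \geq 2$, a graph $G$ is an $r$-Ramsey graph for a graph $H$ if every colouring of the edges of $G$ with $r$ colours admits a monochromatic copy of $H$ (a copy of $H$ as a subgraph of $G$ all of whose edges receive the same colour). Two graphs $H_1, H_2$ are $r$-Ramsey equivalent if every $r$-Ramsey graph for $H_1$ is an $r$-Ramsey graph for $H_2$, and vice versa. *)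

theory Defs
  imports Main
begin

definition simple_graph :: "'a set \<Rightarrow> 'a set set \<Rightarrow> bool" where
  "simple_graph V E \<longleftrightarrow> finite V \<and> (\<forall>e\<in>E. e \<subseteq> V \<and> card e = 2)"

definition K_verts :: "nat \<Rightarrow> nat set" where
  "K_verts m = {0..<m}"

definition K_edges :: "nat \<Rightarrow> nat set set" where
  "K_edges m = {e. e \<subseteq> {0..<m} \<and> card e = 2}"

definition disj_union_verts :: "'a set \<Rightarrow> 'b set \<Rightarrow> ('a + 'b) set" where
  "disj_union_verts V1 V2 = Inl ` V1 \<union> Inr ` V2"

definition disj_union_edges :: "'a set set \<Rightarrow> 'b set set \<Rightarrow> ('a + 'b) set set" where
  "disj_union_edges E1 E2 = (\<lambda>e. Inl ` e) ` E1 \<union> (\<lambda>e. Inr ` e) ` E2"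

definition mono_copy :: "'b set \<Rightarrow> 'b set set \<Rightarrow> 'a set \<Rightarrow> 'a set set \<Rightarrow> ('a set \<Rightarrow> nat) \<Rightarrow> bool" where
  "mono_copy VH EH V E c \<longleftrightarrow>
     (\<exists>f i. inj_on f VH \<and> f ` VH \<subseteq> V \<and> (\<forall>e\<in>EH. f ` e \<in> E \<and> c (f ` e) = i))"

definition is_ramsey :: "nat \<Rightarrow> 'b set \<Rightarrow> 'b set set \<Rightarrow> 'a set \<Rightarrow> 'a set set \<Rightarrow> bool" where
  "is_ramsey r VH EH V E \<longleftrightarrow>
     (\<forall>c :: 'a set \<Rightarrow> nat. (\<forall>e\<in>E. c e < r) \<longrightarrow> mono_copy VH EH V E c)"

end

theory Submission
  imports Defs
begin

(*
  Restricting a copy of K_n + K_(n-1) to its first component gives one direction. Conversely,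
  let c be an r-colouring of G without monochromatic K_n + K_(n-1). For every colour j with a
  monochromatic K_n fix one, S_j, and let J be the set of these colours; then a clique of colour j
  disjoint from S_j has fewer than n - 1 vertices, and a clique of a colour outside J fewer than n.
  The union U of the S_j has at most |J| n vertices, so it can be labelled by J and recoloured
  without monochromatic K_n such that two vertices with the same label j are never joined in
  colour j (this needs r >= 3). An edge from u in U to a vertex outside U gets the label of u, all
  other edges keep their colour. A monochromatic K_n of colour k in the new colouring meets U in
  at most one vertex, labelled k, so the rest is a clique of colour k under c outside U with at
  least n - 1 vertices: impossible. Hence G is not r-Ramsey for K_n either.
*)

definition monochromatic :: "('b \<Rightarrow> 'b \<Rightarrow> nat) \<Rightarrow> nat \<Rightarrow> 'b set \<Rightarrow> bool" where
  "monochromatic col k Q \<longleftrightarrow> (\<forall>x\<in>Q. \<forall>y\<in>Q. x \<noteq> y \<longrightarrow> col x y = k)"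

lemma card_le_if_proper_colouring:
  assumes "finite Q" and "\<forall>x\<in>Q. \<forall>y\<in>Q. x \<noteq> y \<longrightarrow> \<rho> x \<noteq> \<rho> y" and "\<forall>x\<in>Q. \<rho> x < (k::nat)"
  shows "card Q \<le> k"
proof -
  have "inj_on \<rho> Q" using assms(2) by (auto simp: inj_on_def)
  then have "card Q = card (\<rho> ` Q)" by (simp add: card_image)
  also have "\<dots> \<le> card {..<k}" by (rule card_mono) (use assms(3) in auto)
  finally show ?thesis by simp
qed

lemma add_mod_neq_self:
  fixes t d r :: nat
  assumes "0 < d" and "d < r"
  shows "(t + d) mod r \<noteq> t"
proof (cases "t < r")
  case True
  then show ?thesis
    using assms by (cases "t + d < r") (simp_all add: le_mod_geq)
next
  case False
  have "(t + d) mod r < r" using assms by simp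
  with False show ?thesis by simp
qed

section \<open>Colourings of blocks without monochromatic K_n\<close>

text \<open>Block {t} \<times> {..<n} becomes the class of vertices labelled t in labelled_colouring_transfer.\<close>
definition block_colouring :: "nat \<Rightarrow> nat \<Rightarrow> (nat \<times> nat \<Rightarrow> nat \<times> nat \<Rightarrow> nat) \<Rightarrow> bool" where
  "block_colouring r n col \<longleftrightarrow>
     (\<forall>x\<in>{..<r} \<times> {..<n}. \<forall>y\<in>{..<r} \<times> {..<n}. col x y = col y x \<and> col x y < r) \<and>
     (\<forall>t<r. \<forall>p<n. \<forall>q<n. p \<noteq> q \<longrightarrow> col (t, p) (t, q) \<noteq> t) \<and>
     (\<forall>Q k. Q \<subseteq> {..<r} \<times> {..<n} \<longrightarrow> card Q = n \<longrightarrow> \<not> monochromatic col k Q)"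

definition cyc_col :: "nat \<Rightarrow> nat \<times> nat \<Rightarrow> nat \<times> nat \<Rightarrow> nat" where
  "cyc_col r x y =
     (if fst x \<noteq> fst y then min (fst x) (fst y)
      else if (snd x < 2) = (snd y < 2) then (fst x + 1) mod r else (fst x + 2) mod r)"

text \<open>The edges of colour k join block k to later blocks or lie inside the blocks k - 1 and k - 2
  (mod r); this map colours that graph properly with n - 1 colours.\<close>
definition cyc_col_class_colouring :: "nat \<Rightarrow> nat \<Rightarrow> nat \<times> nat \<Rightarrow> nat" where
  "cyc_col_class_colouring r k x =
     (if fst x = k then 0
      else if (fst x + 1) mod r = k then (if snd x < 2 then snd x + 1 else snd x - 1)
      else if snd x < 2 then 1 else 2)"

lemma cyc_col_class_colouring_proper:
  assumes r: "r \<ge> 3" and "x \<noteq> y" and "cyc_col r x y = k"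
  shows "cyc_col_class_colouring r k x \<noteq> cyc_col_class_colouring r k y"
proof -
  obtain s p t q where x: "x = (s, p)" and y: "y = (t, q)" by fastforce
  have "((s + 1) mod r + 1) mod r \<noteq> (s + 1) mod r"
    using add_mod_neq_self[of 1 r] r by simp
  then have "(s + 1) mod r \<noteq> (s + 2) mod r"
    by (metis mod_add_left_eq add.assoc one_add_one)
  moreover have "(s + 1) mod r \<noteq> s" "(s + 2) mod r \<noteq> s"
    using add_mod_neq_self[of 1 r s] add_mod_neq_self[of 2 r s] r by auto
  ultimately show ?thesis
    using assms unfolding x y cyc_col_def cyc_col_class_colouring_def
    by (auto simp: min_def split: if_splits)
qed

lemma block_colouring_cyc_col:
  assumes "n \<ge> 4" and "r \<ge> 3"
  shows "block_colouring r n (cyc_col r)"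
  unfolding block_colouring_def
proof (intro conjI allI ballI impI)
  fix x y assume "x \<in> {..<r} \<times> {..<n}" "y \<in> {..<r} \<times> {..<n}"
  then show "cyc_col r x y = cyc_col r y x" "cyc_col r x y < r"
    unfolding cyc_col_def by auto
next
  fix t p q assume "t < r" "p < n" "q < n" "p \<noteq> q"
  then show "cyc_col r (t, p) (t, q) \<noteq> t"
    using add_mod_neq_self[of 1 r t] add_mod_neq_self[of 2 r t] assms(2)
    unfolding cyc_col_def by auto
next
  fix Q k assume Q: "Q \<subseteq> {..<r} \<times> {..<n}" "card Q = n"
  show "\<not> monochromatic (cyc_col r) k Q"
  proof
    assume "monochromatic (cyc_col r) k Q"
    then have "card Q \<le> n - 1"
      using Q assms cyc_col_class_colouring_proper finite_subset[OF Q(1)]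
      by (intro card_le_if_proper_colouring[where \<rho> = "cyc_col_class_colouring r k"])
        (auto simp: monochromatic_def cyc_col_class_colouring_def)
    with Q assms show False by simp
  qed
qed

definition gtab :: "nat list list" where
  "gtab =
    [[0, 1, 1, 0, 0, 2, 1, 0, 2],
     [1, 0, 2, 0, 1, 1, 0, 1, 2],
     [1, 2, 0, 1, 0, 1, 0, 2, 0],
     [0, 0, 1, 0, 2, 0, 1, 1, 0],
     [0, 1, 0, 2, 0, 0, 1, 2, 2],
     [2, 1, 1, 0, 0, 0, 0, 2, 1],
     [1, 0, 0, 1, 1, 0, 0, 0, 1],
     [0, 1, 2, 1, 2, 2, 0, 0, 1],
     [2, 2, 0, 0, 2, 1, 1, 1, 0]]"

lemma gtab_triangle_free:
  "\<forall>a\<in>set [0..<9]. \<forall>b\<in>set [0..<9]. \<forall>c\<in>set [0..<9]. a \<noteq> b \<longrightarrow> a \<noteq> c \<longrightarrow> b \<noteq> c \<longrightarrow>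
     gtab ! a ! b \<noteq> gtab ! a ! c \<or> gtab ! a ! b \<noteq> gtab ! b ! c"
  by code_simp

lemma gtab_sym: "\<forall>a\<in>set [0..<9]. \<forall>b\<in>set [0..<9]. gtab ! a ! b = gtab ! b ! a"
  by code_simp

lemma gtab_less_3: "\<forall>a\<in>set [0..<9]. \<forall>b\<in>set [0..<9]. gtab ! a ! b < 3"
  by code_simp

lemma gtab_block_avoids_label:
  "\<forall>i\<in>set [0..<3]. \<forall>p\<in>set [0..<3]. \<forall>q\<in>set [0..<3]. p \<noteq> q \<longrightarrow> gtab ! (3 * i + p) ! (3 * i + q) \<noteq> i"
  by code_simp

definition tab_index :: "nat \<Rightarrow> nat \<times> nat \<Rightarrow> nat" where
  "tab_index r x = 3 * (fst x - (r - 3)) + snd x"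

text \<open>For n = 3 the cyclic colouring fails: block 0 and the pair of block r - 1 coloured 0 span a
  triangle of colour 0. So the three top blocks, a K_9, are coloured instead by the triangle-free
  3-colouring gtab, shifted to the colours r - 3, r - 2, r - 1.\<close>
definition tab_col :: "nat \<Rightarrow> nat \<times> nat \<Rightarrow> nat \<times> nat \<Rightarrow> nat" where
  "tab_col r x y =
     (if fst x \<noteq> fst y \<and> min (fst x) (fst y) < r - 3 then min (fst x) (fst y)
      else if fst x < r - 3 then (if (snd x < 2) = (snd y < 2) then fst x + 1 else fst x + 2)
      else r - 3 + gtab ! tab_index r x ! tab_index r y)"

definition tab_col_class_colouring :: "nat \<Rightarrow> nat \<times> nat \<Rightarrow> nat" where
  "tab_col_class_colouring k x =
     (if fst x = k then 0 else if k < fst x then 1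
      else if fst x + 1 = k then (if snd x = 0 then 0 else 1)
      else if snd x = 2 then 1 else 0)"

lemma tab_index_less_9:
  assumes "r \<ge> 3" and "x \<in> {..<r} \<times> {..<3}" and "r - 3 \<le> fst x"
  shows "tab_index r x < 9"
  using assms unfolding tab_index_def by auto

lemma tab_col_class_colouring_proper:
  assumes "k < r - 3" and "x \<in> {..<r} \<times> {..<3}" and "y \<in> {..<r} \<times> {..<3}"
    and "x \<noteq> y" and "tab_col r x y = k"
  shows "tab_col_class_colouring k x \<noteq> tab_col_class_colouring k y"
  using assms unfolding tab_col_def tab_col_class_colouring_def
  by (auto simp: min_def prod_eq_iff split: if_splits)

lemma tab_index_inj:
  assumes "x \<in> {..<r} \<times> {..<3}" "y \<in> {..<r} \<times> {..<3}" "r - 3 \<le> fst x" "r - 3 \<le> fst y"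
    and "tab_index r x = tab_index r y"
  shows "x = y"
proof -
  have div_mod: "fst z - (r - 3) = tab_index r z div 3 \<and> snd z = tab_index r z mod 3"
    if "snd z < 3" for z
    using that unfolding tab_index_def by simp
  have "fst x - (r - 3) = fst y - (r - 3) \<and> snd x = snd y"
    using div_mod[of x] div_mod[of y] assms(1,2,5) by auto
  then show ?thesis using assms(3,4) by (simp add: prod_eq_iff) arith
qed

lemma tab_col_top_triangle_free:
  fixes Q :: "(nat \<times> nat) set"
  assumes r: "r \<ge> 3" and Q: "Q \<subseteq> {..<r} \<times> {..<3}" "\<forall>x\<in>Q. r - 3 \<le> fst x"
    and "card Q = 3" and mono: "monochromatic (tab_col r) k Q"
  shows False
proof -
  obtain a b c where abc: "Q = {a, b, c}" "a \<noteq> b" "b \<noteq> c" "a \<noteq> c"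
    using \<open>card Q = 3\<close> card_3_iff by metis
  have Qabc: "a \<in> Q" "b \<in> Q" "c \<in> Q" using abc by auto
  have tab: "tab_col r x y = r - 3 + gtab ! tab_index r x ! tab_index r y" if "x \<in> Q" "y \<in> Q" for x y
    using Q that unfolding tab_col_def by auto
  have idx: "tab_index r x \<in> {0..<9}" if "x \<in> Q" for x
    using tab_index_less_9[OF r, of x] Q that by auto
  have inj: "tab_index r x \<noteq> tab_index r y" if "x \<in> Q" "y \<in> Q" "x \<noteq> y" for x y
    using tab_index_inj[of x r y] Q that by auto
  have "tab_col r a b = k" "tab_col r a c = k" "tab_col r b c = k"
    using mono abc unfolding monochromatic_def by auto
  then have "gtab ! tab_index r a ! tab_index r b = gtab ! tab_index r a ! tab_index r c"
    "gtab ! tab_index r a ! tab_index r b = gtab ! tab_index r b ! tab_index r c"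
    using tab Qabc by auto
  moreover note gtab_triangle_free[unfolded set_upt, rule_format,
      OF idx[OF Qabc(1)] idx[OF Qabc(2)] idx[OF Qabc(3)]]
  ultimately show False
    using inj Qabc abc(2-4) by blast
qed

lemma tab_col_low_triangle_free:
  fixes Q :: "(nat \<times> nat) set"
  assumes "r - 3 \<le> k" and Q: "Q \<subseteq> {..<r} \<times> {..<3}" "card Q = 3"
    and mono: "monochromatic (tab_col r) k Q" and x: "x \<in> Q" "fst x < r - 3"
  shows False
proof -
  have "fst y = fst x" if "y \<in> Q" for y
  proof (rule ccontr)
    assume "fst y \<noteq> fst x"
    then have "tab_col r x y = min (fst x) (fst y)" using x unfolding tab_col_def by auto
    moreover have "tab_col r x y = k" using mono that x \<open>fst y \<noteq> fst x\<close>
      unfolding monochromatic_def by auto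
    ultimately show False using x assms(1) by simp
  qed
  then have "Q \<subseteq> {fst x} \<times> {..<3}" using Q by auto
  then have "Q = {fst x} \<times> {..<3}"
    using Q by (intro card_subset_eq) auto
  then have "tab_col r (fst x, 0) (fst x, 1) = k" "tab_col r (fst x, 0) (fst x, 2) = k"
    using mono unfolding monochromatic_def by auto
  then show False using x unfolding tab_col_def by auto
qed

lemma block_colouring_tab_col:
  assumes r: "r \<ge> 3"
  shows "block_colouring r 3 (tab_col r)"
  unfolding block_colouring_def
proof (intro conjI allI ballI impI)
  fix x y :: "nat \<times> nat" assume xy: "x \<in> {..<r} \<times> {..<3}" "y \<in> {..<r} \<times> {..<3}"
  have top: "tab_index r x \<in> set [0..<9]" "tab_index r y \<in> set [0..<9]"
    if "r - 3 \<le> fst x" "r - 3 \<le> fst y"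
    using tab_index_less_9[OF r] xy that by auto
  have "tab_col r x y = tab_col r y x \<and> tab_col r x y < r"
  proof (cases "r - 3 \<le> fst x \<and> r - 3 \<le> fst y")
    case True
    then have "gtab ! tab_index r x ! tab_index r y = gtab ! tab_index r y ! tab_index r x"
      "gtab ! tab_index r x ! tab_index r y < 3"
      using gtab_sym gtab_less_3 top by blast+
    with True r show ?thesis unfolding tab_col_def by (simp add: min_def)
  next
    case False
    with r xy show ?thesis unfolding tab_col_def by (auto simp: min_def)
  qed
  then show "tab_col r x y = tab_col r y x" "tab_col r x y < r" by auto
next
  fix t p q :: nat assume "t < r" "p < 3" "q < 3" "p \<noteq> q"
  then show "tab_col r (t, p) (t, q) \<noteq> t"
  proof (cases "t < r - 3")
    case False
    with \<open>t < r\<close> \<open>p < 3\<close> \<open>q < 3\<close> \<open>p \<noteq> q\<close>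
    have "gtab ! (3 * (t - (r - 3)) + p) ! (3 * (t - (r - 3)) + q) \<noteq> t - (r - 3)"
      using gtab_block_avoids_label[unfolded set_upt, rule_format, of "t - (r - 3)" p q] by auto
    with False show ?thesis unfolding tab_col_def tab_index_def by (auto; linarith)
  qed (auto simp: tab_col_def)
next
  fix Q :: "(nat \<times> nat) set" and k assume Q: "Q \<subseteq> {..<r} \<times> {..<3}" "card Q = 3"
  show "\<not> monochromatic (tab_col r) k Q"
  proof
    assume mono: "monochromatic (tab_col r) k Q"
    consider "k < r - 3" | "r - 3 \<le> k" "\<exists>x\<in>Q. fst x < r - 3" | "\<forall>x\<in>Q. r - 3 \<le> fst x"
      by force
    then show False
    proof cases
      case 1
      have "card Q \<le> 2"
      proof (rule card_le_if_proper_colouring)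
        show "finite Q" using finite_subset[OF Q(1)] by blast
        show "\<forall>x\<in>Q. \<forall>y\<in>Q. x \<noteq> y \<longrightarrow> tab_col_class_colouring k x \<noteq> tab_col_class_colouring k y"
          using tab_col_class_colouring_proper[OF 1] mono Q(1) unfolding monochromatic_def by blast
        show "\<forall>x\<in>Q. tab_col_class_colouring k x < 2" by (simp add: tab_col_class_colouring_def)
      qed
      with Q show False by simp
    next
      case 2
      then show False using tab_col_low_triangle_free Q mono by blast
    next
      case 3
      then show False using tab_col_top_triangle_free r Q mono by blast
    qed
  qed
qed

lemma block_colouring_exists:
  assumes "n \<ge> 3" and "r \<ge> 3"
  obtains col where "block_colouring r n col"
proof (cases "n = 3")
  case True
  then show ?thesis using block_colouring_tab_col assms that by blast
next
  case False
  then have "n \<ge> 4" using assms by simp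
  then show ?thesis using block_colouring_cyc_col assms that by blast
qed

section \<open>Labelled colourings\<close>

lemma ex_perm_lessThan_onto_prefix:
  fixes J :: "nat set"
  assumes "J \<subseteq> {..<r}"
  obtains \<pi> where "bij_betw \<pi> {..<r} {..<r}" and "\<pi> ` {..<card J} = J"
proof -
  have fin: "finite J" "finite ({..<r} - J)" using assms finite_subset by auto
  define xs where "xs = sorted_list_of_set J @ sorted_list_of_set ({..<r} - J)"
  have "distinct xs" using fin unfolding xs_def by auto
  moreover have "set xs = {..<r}" using fin assms unfolding xs_def by auto
  moreover from calculation have "length xs = r" using distinct_card by fastforce
  ultimately have "bij_betw ((!) xs) {..<r} {..<r}" by (intro bij_betw_nth) auto
  moreover have "(!) xs ` {..<card J} = J"
  proof -
    have "(!) xs ` {..<card J} = (!) (sorted_list_of_set J) ` {..<card J}"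
      unfolding xs_def by (intro image_cong) (auto simp: nth_append)
    also have "\<dots> = J"
      using bij_betw_nth[of "sorted_list_of_set J"] fin by (simp add: bij_betw_def)
    finally show ?thesis .
  qed
  ultimately show ?thesis using that by blast
qed

definition labelled_colouring ::
    "nat \<Rightarrow> nat \<Rightarrow> nat set \<Rightarrow> 'a set \<Rightarrow> ('a \<Rightarrow> 'a \<Rightarrow> nat) \<Rightarrow> ('a \<Rightarrow> nat) \<Rightarrow> bool" where
  "labelled_colouring r n J U col lab \<longleftrightarrow>
     (\<forall>u\<in>U. lab u \<in> J) \<and>
     (\<forall>u\<in>U. \<forall>v\<in>U. col u v = col v u \<and> col u v < r) \<and>
     (\<forall>u\<in>U. \<forall>v\<in>U. u \<noteq> v \<longrightarrow> lab u = lab v \<longrightarrow> col u v \<noteq> lab u) \<and>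
     (\<forall>Q k. Q \<subseteq> U \<longrightarrow> card Q = n \<longrightarrow> \<not> monochromatic col k Q)"

lemma labelled_colouring_transfer:
  assumes "block_colouring r n col"
    and \<pi>: "bij_betw \<pi> {..<r} {..<r}" "\<pi> ` {..<m} = J" and "m \<le> r"
    and h: "h ` U \<subseteq> {..<m} \<times> {..<n}" "inj_on h U"
  shows "labelled_colouring r n J U (\<lambda>u v. \<pi> (col (h u) (h v))) (\<lambda>u. \<pi> (fst (h u)))"
    (is "labelled_colouring r n J U ?col ?lab")
proof -
  have col_sym: "\<And>x y. x \<in> {..<r} \<times> {..<n} \<Longrightarrow> y \<in> {..<r} \<times> {..<n} \<Longrightarrow>
        col x y = col y x \<and> col x y < r"
    and col_block: "\<And>t p q. t < r \<Longrightarrow> p < n \<Longrightarrow> q < n \<Longrightarrow> p \<noteq> q \<Longrightarrow> col (t, p) (t, q) \<noteq> t"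
    and col_mono: "\<And>Q k. Q \<subseteq> {..<r} \<times> {..<n} \<Longrightarrow> card Q = n \<Longrightarrow> \<not> monochromatic col k Q"
    using assms(1) unfolding block_colouring_def by blast+
  have \<pi>_inj: "inj_on \<pi> {..<r}" and \<pi>_lt: "\<And>t. t < r \<Longrightarrow> \<pi> t < r"
    using \<pi>(1) by (auto simp: bij_betw_def)
  have hU: "h u \<in> {..<r} \<times> {..<n}" if "u \<in> U" for u using h(1) that \<open>m \<le> r\<close> by fastforce
  show ?thesis
    unfolding labelled_colouring_def
  proof (intro conjI ballI allI impI notI)
    fix u assume "u \<in> U"
    then show "?lab u \<in> J" using h(1) \<pi>(2) by fastforce
  next
    fix u v assume "u \<in> U" "v \<in> U"
    then show "?col u v = ?col v u" "?col u v < r"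
      using col_sym hU \<pi>_lt by auto
  next
    fix u v assume uv: "u \<in> U" "v \<in> U" "u \<noteq> v" "?lab u = ?lab v" "?col u v = ?lab u"
    obtain t p t' q where hu: "h u = (t, p)" and hv: "h v = (t', q)" by fastforce
    have "t < r" "t' < r" "p < n" "q < n" using hU[OF uv(1)] hU[OF uv(2)] hu hv by auto
    moreover from this have "t = t'" using uv(4) \<pi>_inj hu hv by (auto dest: inj_onD)
    moreover have "p \<noteq> q" using uv(1-3) h(2) hu hv \<open>t = t'\<close> by (metis inj_onD)
    ultimately have "col (t, p) (t, q) \<noteq> t" "col (t, p) (t, q) < r"
      using col_block col_sym by auto
    then show False
      using uv(5) \<pi>_inj \<open>t < r\<close> hu hv \<open>t = t'\<close> by (auto dest: inj_onD)
  next
    fix Q k assume Q: "Q \<subseteq> U" "card Q = n" and mono: "monochromatic ?col k Q"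
    have "monochromatic col (the_inv_into {..<r} \<pi> k) (h ` Q)"
      unfolding monochromatic_def
    proof (intro ballI impI)
      fix x y assume "x \<in> h ` Q" "y \<in> h ` Q" "x \<noteq> y"
      then obtain u v where "u \<in> Q" "v \<in> Q" "u \<noteq> v" "x = h u" "y = h v" by blast
      moreover from calculation have "col x y < r" using col_sym hU Q(1) by blast
      ultimately show "col x y = the_inv_into {..<r} \<pi> k"
        using mono \<pi>_inj unfolding monochromatic_def by (auto intro: the_inv_into_f_eq[symmetric])
    qed
    moreover have "card (h ` Q) = n" using Q h(2) by (simp add: card_image inj_on_subset)
    ultimately show False using col_mono hU Q(1) by blast
  qed
qed

lemma labelled_colouring_exists:
  assumes "n \<ge> 3" and "r \<ge> 3" and "finite U" and "card U \<le> card J * n" and J: "J \<subseteq> {..<r}"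
  obtains col lab where "labelled_colouring r n J U col lab"
proof -
  obtain col where "block_colouring r n col" using block_colouring_exists assms(1,2) by blast
  moreover obtain \<pi> where "bij_betw \<pi> {..<r} {..<r}" "\<pi> ` {..<card J} = J"
    using ex_perm_lessThan_onto_prefix[OF J] by blast
  moreover obtain h where "h ` U \<subseteq> {..<card J} \<times> {..<n}" "inj_on h U"
    using card_le_inj[OF assms(3), of "{..<card J} \<times> {..<n}"] assms(4)
    by (auto simp: card_cartesian_product)
  moreover have "card J \<le> r" using card_mono[OF _ J] by simp
  ultimately show ?thesis using labelled_colouring_transfer that by metis
qed

section \<open>Monochromatic cliques and copies\<close>

definition mono_clique :: "'a set \<Rightarrow> 'a set set \<Rightarrow> ('a set \<Rightarrow> nat) \<Rightarrow> nat \<Rightarrow> 'a set \<Rightarrow> bool" where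
  "mono_clique V E c i Q \<longleftrightarrow> Q \<subseteq> V \<and> (\<forall>x\<in>Q. \<forall>y\<in>Q. x \<noteq> y \<longrightarrow> {x, y} \<in> E \<and> c {x, y} = i)"

lemma mono_clique_subset: "mono_clique V E c i Q \<Longrightarrow> B \<subseteq> Q \<Longrightarrow> mono_clique V E c i B"
  unfolding mono_clique_def by blast

lemma mono_clique_if_mono_copy_K:
  assumes "mono_copy (K_verts n) (K_edges n) V E c"
  obtains Q i where "card Q = n" and "mono_clique V E c i Q"
proof -
  obtain f i where f: "inj_on f {0..<n}" "f ` {0..<n} \<subseteq> V"
    "\<forall>e\<in>K_edges n. f ` e \<in> E \<and> c (f ` e) = i"
    using assms unfolding mono_copy_def K_verts_def by blast
  have "mono_clique V E c i (f ` {0..<n})"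
    unfolding mono_clique_def
  proof (intro conjI ballI impI)
    fix x y assume "x \<in> f ` {0..<n}" "y \<in> f ` {0..<n}" "x \<noteq> y"
    then obtain a b where ab: "a < n" "b < n" "x = f a" "y = f b" by auto
    moreover from ab \<open>x \<noteq> y\<close> have "a \<noteq> b" by blast
    ultimately have "{a, b} \<in> K_edges n" unfolding K_edges_def by auto
    then show "{x, y} \<in> E" "c {x, y} = i" using f(3) ab by auto
  qed (use f(2) in blast)
  moreover have "card (f ` {0..<n}) = n" using card_image[OF f(1)] by simp
  ultimately show ?thesis using that by blast
qed

lemma mono_clique_edge_image:
  assumes "mono_clique V E c i Q" and "inj_on g {0..<m}" and "g ` {0..<m} \<subseteq> Q"
    and "e \<in> K_edges m"
  shows "g ` e \<in> E \<and> c (g ` e) = i"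
proof -
  obtain a b where "e = {a, b}" "a \<noteq> b" "a < m" "b < m"
    using assms(4) unfolding K_edges_def by (auto simp: card_2_iff)
  moreover from calculation have "g a \<in> Q" "g b \<in> Q" "g a \<noteq> g b"
    using assms(3) inj_on_contraD[OF assms(2)] by auto
  ultimately show ?thesis
    using assms(1) unfolding mono_clique_def by simp
qed

lemma mono_copy_union_if_disjoint_mono_cliques:
  assumes "n \<ge> 2" and "card Q1 = n" and "card Q2 = n - 1" and disj: "Q1 \<inter> Q2 = {}"
    and Q1: "mono_clique V E c i Q1" and Q2: "mono_clique V E c i Q2"
  shows "mono_copy (disj_union_verts (K_verts n) (K_verts (n - 1)))
           (disj_union_edges (K_edges n) (K_edges (n - 1))) V E c"
proof -
  have "finite Q1" "finite Q2" using assms(1-3) by (auto intro: card_ge_0_finite)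
  then obtain f1 f2 where "bij_betw f1 {0..<n} Q1" and "bij_betw f2 {0..<n - 1} Q2"
    using ex_bij_betw_nat_finite assms(2,3) by metis
  then have f1: "inj_on f1 {0..<n}" "f1 ` {0..<n} = Q1"
    and f2: "inj_on f2 {0..<n - 1}" "f2 ` {0..<n - 1} = Q2"
    by (auto simp: bij_betw_def)
  define f where "f = case_sum f1 f2"
  have f_Inl: "f ` Inl ` A = f1 ` A" and f_Inr: "f ` Inr ` A = f2 ` A" for A
    unfolding f_def by (simp_all add: image_image)
  have "inj_on f (Inl ` {0..<n})" "inj_on f (Inr ` {0..<n - 1})"
    using comp_inj_on_iff[of Inl "{0..<n}" f] comp_inj_on_iff[of Inr "{0..<n - 1}" f] f1(1) f2(1)
    unfolding f_def by (simp_all add: inj_on_def)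
  moreover have "Inl ` {0..<n} - Inr ` {0..<n - 1} = Inl ` {0..<n}"
    "Inr ` {0..<n - 1} - Inl ` {0..<n} = Inr ` {0..<n - 1}" by auto
  moreover have "f ` Inl ` {0..<n} \<inter> f ` Inr ` {0..<n - 1} = {}"
    using disj f1(2) f2(2) f_Inl f_Inr by simp
  ultimately have "inj_on f (disj_union_verts (K_verts n) (K_verts (n - 1)))"
    unfolding disj_union_verts_def K_verts_def inj_on_Un by simp
  moreover have "f ` disj_union_verts (K_verts n) (K_verts (n - 1)) \<subseteq> V"
    using Q1 Q2 f1(2) f2(2) unfolding disj_union_verts_def K_verts_def mono_clique_def
    by (simp add: image_Un f_Inl f_Inr)
  moreover have "f ` e \<in> E \<and> c (f ` e) = i"
    if e: "e \<in> disj_union_edges (K_edges n) (K_edges (n - 1))" for e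
  proof -
    consider e' where "e' \<in> K_edges n" "e = Inl ` e'" | e' where "e' \<in> K_edges (n - 1)" "e = Inr ` e'"
      using e unfolding disj_union_edges_def by blast
    then show ?thesis
    proof cases
      case 1
      then show ?thesis using mono_clique_edge_image[OF Q1 f1(1)] f1(2) f_Inl by simp
    next
      case 2
      then show ?thesis using mono_clique_edge_image[OF Q2 f2(1)] f2(2) f_Inr by simp
    qed
  qed
  ultimately show ?thesis unfolding mono_copy_def by (intro exI[of _ f] exI[of _ i]) blast
qed

lemma is_ramsey_K_if_is_ramsey_union:
  assumes "is_ramsey r (disj_union_verts (K_verts n) (K_verts (n - 1)))
             (disj_union_edges (K_edges n) (K_edges (n - 1))) V E"
  shows "is_ramsey r (K_verts n) (K_edges n) V E"
  unfolding is_ramsey_def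
proof (intro allI impI)
  fix c :: "'a set \<Rightarrow> nat" assume "\<forall>e\<in>E. c e < r"
  with assms have "mono_copy (disj_union_verts (K_verts n) (K_verts (n - 1)))
      (disj_union_edges (K_edges n) (K_edges (n - 1))) V E c"
    unfolding is_ramsey_def by blast
  then obtain f i where f: "inj_on f (disj_union_verts (K_verts n) (K_verts (n - 1)))"
    "f ` disj_union_verts (K_verts n) (K_verts (n - 1)) \<subseteq> V"
    "\<forall>e\<in>disj_union_edges (K_edges n) (K_edges (n - 1)). f ` e \<in> E \<and> c (f ` e) = i"
    unfolding mono_copy_def by blast
  have "inj_on f (Inl ` K_verts n)"
    using f(1) unfolding disj_union_verts_def by (rule inj_on_subset) blast
  then have "inj_on (f \<circ> Inl) (K_verts n)"
    using comp_inj_on_iff[of Inl "K_verts n" f] by (simp add: inj_on_def)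
  moreover have "(f \<circ> Inl) ` K_verts n \<subseteq> V"
    using f(2) unfolding disj_union_verts_def image_comp[symmetric] by blast
  moreover have "(f \<circ> Inl) ` e \<in> E \<and> c ((f \<circ> Inl) ` e) = i" if "e \<in> K_edges n" for e
  proof -
    have "Inl ` e \<in> disj_union_edges (K_edges n) (K_edges (n - 1))"
      using that unfolding disj_union_edges_def by blast
    then show ?thesis using f(3) unfolding image_comp[symmetric] by blast
  qed
  ultimately show "mono_copy (K_verts n) (K_edges n) V E c"
    unfolding mono_copy_def by (intro exI[of _ "f \<circ> Inl"] exI[of _ i]) blast
qed

section \<open>Recolouring\<close>

definition sym_edge_colour :: "('a \<Rightarrow> 'a \<Rightarrow> 'b) \<Rightarrow> 'a set \<Rightarrow> 'b" where
  "sym_edge_colour F e = (SOME k. \<exists>x y. e = {x, y} \<and> k = F x y)"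

lemma sym_edge_colour_doubleton:
  assumes "\<And>x y. F x y = F y x"
  shows "sym_edge_colour F {x, y} = F x y"
proof -
  define P where "P k \<longleftrightarrow> (\<exists>x' y'. {x, y} = {x', y'} \<and> k = F x' y')" for k
  have "P (F x y)" unfolding P_def by blast
  then have "P (SOME k. P k)" by (rule someI)
  then obtain x' y' where "{x, y} = {x', y'}" "(SOME k. P k) = F x' y'"
    unfolding P_def by blast
  moreover have "sym_edge_colour F {x, y} = (SOME k. P k)"
    unfolding sym_edge_colour_def P_def ..
  ultimately show ?thesis using assms by (auto simp: doubleton_eq_iff)
qed

definition recolour_pair ::
    "'a set \<Rightarrow> ('a \<Rightarrow> 'a \<Rightarrow> nat) \<Rightarrow> ('a \<Rightarrow> nat) \<Rightarrow> ('a set \<Rightarrow> nat) \<Rightarrow> 'a \<Rightarrow> 'a \<Rightarrow> nat" where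
  "recolour_pair U col lab c x y =
     (if x \<in> U \<and> y \<in> U then col x y else if x \<in> U then lab x else if y \<in> U then lab y else c {x, y})"

definition recolour ::
    "'a set \<Rightarrow> ('a \<Rightarrow> 'a \<Rightarrow> nat) \<Rightarrow> ('a \<Rightarrow> nat) \<Rightarrow> ('a set \<Rightarrow> nat) \<Rightarrow> 'a set \<Rightarrow> nat" where
  "recolour U col lab c = sym_edge_colour (recolour_pair U col lab c)"

lemma
  assumes "\<forall>u\<in>U. \<forall>v\<in>U. col u v = col v u"
  shows recolour_inside: "x \<in> U \<Longrightarrow> y \<in> U \<Longrightarrow> recolour U col lab c {x, y} = col x y"
    and recolour_leaving: "x \<in> U \<Longrightarrow> y \<notin> U \<Longrightarrow> recolour U col lab c {x, y} = lab x"
    and recolour_outside: "x \<notin> U \<Longrightarrow> y \<notin> U \<Longrightarrow> recolour U col lab c {x, y} = c {x, y}"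
proof -
  have "recolour_pair U col lab c x y = recolour_pair U col lab c y x" for x y
    using assms unfolding recolour_pair_def by (simp add: insert_commute)
  then have "recolour U col lab c {x, y} = recolour_pair U col lab c x y"
    unfolding recolour_def by (rule sym_edge_colour_doubleton)
  then show "x \<in> U \<Longrightarrow> y \<in> U \<Longrightarrow> recolour U col lab c {x, y} = col x y"
    and "x \<in> U \<Longrightarrow> y \<notin> U \<Longrightarrow> recolour U col lab c {x, y} = lab x"
    and "x \<notin> U \<Longrightarrow> y \<notin> U \<Longrightarrow> recolour U col lab c {x, y} = c {x, y}"
    unfolding recolour_pair_def by simp_all
qed

lemma mono_clique_recolour:
  assumes lc: "labelled_colouring r n J U col lab" and "card Q = n"
    and mono: "mono_clique V E (recolour U col lab c) k Q"
  shows "mono_clique V E c k (Q - U) \<and> (Q \<inter> U = {} \<or> (\<exists>u\<in>U. Q \<inter> U = {u} \<and> lab u = k))"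
proof -
  have sym: "\<forall>u\<in>U. \<forall>v\<in>U. col u v = col v u"
    and lab_ne: "\<And>u v. u \<in> U \<Longrightarrow> v \<in> U \<Longrightarrow> u \<noteq> v \<Longrightarrow> lab u = lab v \<Longrightarrow> col u v \<noteq> lab u"
    and no_mono: "\<And>Q k. Q \<subseteq> U \<Longrightarrow> card Q = n \<Longrightarrow> \<not> monochromatic col k Q"
    using lc unfolding labelled_colouring_def by blast+
  have edge: "{x, y} \<in> E \<and> recolour U col lab c {x, y} = k" if "x \<in> Q" "y \<in> Q" "x \<noteq> y" for x y
    using mono that unfolding mono_clique_def by blast
  have "\<not> Q \<subseteq> U"
  proof
    assume "Q \<subseteq> U"
    have "col x y = k" if "x \<in> Q" "y \<in> Q" "x \<noteq> y" for x y
    proof -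
      have "x \<in> U" "y \<in> U" using that \<open>Q \<subseteq> U\<close> by auto
      then show ?thesis using edge[OF that] recolour_inside[OF sym] by simp
    qed
    then have "monochromatic col k Q" unfolding monochromatic_def by blast
    with \<open>Q \<subseteq> U\<close> \<open>card Q = n\<close> no_mono show False by blast
  qed
  then obtain w where w: "w \<in> Q" "w \<notin> U" by blast
  have "mono_clique V E c k (Q - U)"
    unfolding mono_clique_def
  proof (intro conjI ballI impI)
    show "Q - U \<subseteq> V" using mono unfolding mono_clique_def by blast
    fix x y assume "x \<in> Q - U" "y \<in> Q - U" "x \<noteq> y"
    with edge[of x y] recolour_outside[OF sym] show "{x, y} \<in> E" "c {x, y} = k"
      by auto
  qed
  moreover have lab_u: "lab u = k" if "u \<in> Q" "u \<in> U" for u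
    using edge[OF that(1) w(1)] w(2) that(2) recolour_leaving[OF sym] by auto
  moreover have "Q \<inter> U \<subseteq> {u}" if "u \<in> Q" "u \<in> U" for u
  proof
    fix v assume v: "v \<in> Q \<inter> U"
    show "v \<in> {u}"
    proof (rule ccontr)
      assume "v \<notin> {u}"
      then have "col u v = k"
        using edge[of u v] that v recolour_inside[OF sym] by auto
      then show False using lab_ne[of u v] lab_u that v \<open>v \<notin> {u}\<close> by auto
    qed
  qed
  ultimately show ?thesis using w by blast
qed

lemma recolour_less:
  assumes lc: "labelled_colouring r n J U col lab" and J: "J \<subseteq> {..<r}"
    and G: "simple_graph V E" and c: "\<forall>e\<in>E. c e < r" and "e \<in> E"
  shows "recolour U col lab c e < r"
proof -
  have sym: "\<forall>u\<in>U. \<forall>v\<in>U. col u v = col v u" and col_lt: "\<forall>u\<in>U. \<forall>v\<in>U. col u v < r"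
    and lab: "\<forall>u\<in>U. lab u \<in> J"
    using lc unfolding labelled_colouring_def by blast+
  obtain x y where e: "e = {x, y}"
    using G \<open>e \<in> E\<close> unfolding simple_graph_def by (meson card_2_iff)
  consider "x \<in> U" "y \<in> U" | "x \<in> U" "y \<notin> U" | "x \<notin> U" "y \<in> U" | "x \<notin> U" "y \<notin> U"
    by blast
  then show ?thesis
  proof cases
    case 1
    then show ?thesis using recolour_inside[OF sym] col_lt e by simp
  next
    case 2
    then show ?thesis using recolour_leaving[OF sym] lab J e by auto
  next
    case 3
    then show ?thesis using recolour_leaving[OF sym, of y x] lab J e by (auto simp: insert_commute)
  next
    case 4
    then show ?thesis using recolour_outside[OF sym] c \<open>e \<in> E\<close> e by simp
  qed
qed

lemma mono_clique_selection:
  fixes c :: "'a set \<Rightarrow> nat"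
  assumes "n \<ge> 2"
    and no_copy: "\<not> mono_copy (disj_union_verts (K_verts n) (K_verts (n - 1)))
                    (disj_union_edges (K_edges n) (K_edges (n - 1))) V E c"
  obtains J S where "J \<subseteq> {..<r}"
    and "\<And>j. j \<in> J \<Longrightarrow> card (S j) = n \<and> mono_clique V E c j (S j)"
    and "\<And>j B. j < r \<Longrightarrow> j \<notin> J \<Longrightarrow> mono_clique V E c j B \<Longrightarrow> card B < n"
    and "\<And>j B. j \<in> J \<Longrightarrow> mono_clique V E c j B \<Longrightarrow> B \<inter> S j = {} \<Longrightarrow> card B < n - 1"
proof -
  define J where "J = {j. j < r \<and> (\<exists>Q. card Q = n \<and> mono_clique V E c j Q)}"
  define S where "S j = (SOME Q. card Q = n \<and> mono_clique V E c j Q)" for j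
  have J_sub: "J \<subseteq> {..<r}" unfolding J_def by auto
  have S: "card (S j) = n \<and> mono_clique V E c j (S j)" if "j \<in> J" for j
    using that someI_ex[of "\<lambda>Q. card Q = n \<and> mono_clique V E c j Q"] unfolding J_def S_def by blast
  have small_out: "card B < n" if "j < r" "j \<notin> J" "mono_clique V E c j B" for j B
  proof (rule ccontr)
    assume "\<not> card B < n"
    then obtain B' where "B' \<subseteq> B" "card B' = n" by (meson not_less obtain_subset_with_card_n)
    with that show False unfolding J_def using mono_clique_subset by blast
  qed
  have small_in: "card B < n - 1" if "j \<in> J" "mono_clique V E c j B" "B \<inter> S j = {}" for j B
  proof (rule ccontr)
    assume "\<not> card B < n - 1"
    then obtain B' where "B' \<subseteq> B" "card B' = n - 1" by (meson not_less obtain_subset_with_card_n)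
    then have "mono_copy (disj_union_verts (K_verts n) (K_verts (n - 1)))
        (disj_union_edges (K_edges n) (K_edges (n - 1))) V E c"
      using mono_copy_union_if_disjoint_mono_cliques[OF \<open>n \<ge> 2\<close>] S[OF that(1)]
        mono_clique_subset[OF that(2)] that(3) by blast
    with no_copy show False by blast
  qed
  show ?thesis by (rule that[OF J_sub S small_out small_in])
qed

lemma mono_clique_colour_less:
  assumes "mono_clique V E c k Q" and "2 \<le> card Q" and "\<forall>e\<in>E. c e < r"
  shows "k < r"
proof -
  have "finite Q" using assms(2) by (intro card_ge_0_finite) simp
  moreover have "\<not> card Q \<le> Suc 0" using assms(2) by simp
  ultimately obtain x y where "x \<in> Q" "y \<in> Q" "x \<noteq> y"
    using card_le_Suc0_iff_eq by blast
  then have "{x, y} \<in> E" "c {x, y} = k" using assms(1) unfolding mono_clique_def by blast+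
  then show ?thesis using assms(3) by blast
qed

lemma recolour_without_mono_K:
  assumes "n \<ge> 3" and lc: "labelled_colouring r n J U col lab"
    and S: "\<And>j. j \<in> J \<Longrightarrow> S j \<subseteq> U"
    and small_out: "\<And>j B. j < r \<Longrightarrow> j \<notin> J \<Longrightarrow> mono_clique V E c j B \<Longrightarrow> card B < n"
    and small_in: "\<And>j B. j \<in> J \<Longrightarrow> mono_clique V E c j B \<Longrightarrow> B \<inter> S j = {} \<Longrightarrow> card B < n - 1"
    and less: "\<forall>e\<in>E. recolour U col lab c e < r"
  shows "\<not> mono_copy (K_verts n) (K_edges n) V E (recolour U col lab c)"
proof
  assume "mono_copy (K_verts n) (K_edges n) V E (recolour U col lab c)"
  then obtain Q k where Q: "card Q = n" "mono_clique V E (recolour U col lab c) k Q"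
    by (rule mono_clique_if_mono_copy_K)
  then have rest: "mono_clique V E c k (Q - U)"
    and meet: "Q \<inter> U = {} \<or> (\<exists>u\<in>U. Q \<inter> U = {u} \<and> lab u = k)"
    using mono_clique_recolour[OF lc] by blast+
  have "k < r" using mono_clique_colour_less[OF Q(2) _ less] Q(1) \<open>n \<ge> 3\<close> by simp
  have "finite Q" using Q(1) \<open>n \<ge> 3\<close> by (intro card_ge_0_finite) simp
  moreover have "card (Q \<inter> U) \<le> 1" using meet by auto
  ultimately have "n - 1 \<le> card (Q - U)"
    using Q(1) card_Diff_subset_Int[of Q U] by simp
  show False
  proof (cases "k \<in> J")
    case True
    then have "(Q - U) \<inter> S k = {}" using S by blast
    with small_in[OF True rest] \<open>n - 1 \<le> card (Q - U)\<close> show False by simp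
  next
    case False
    moreover have "\<forall>u\<in>U. lab u \<in> J" using lc unfolding labelled_colouring_def by blast
    ultimately have "Q - U = Q" using meet by blast
    with small_out[OF \<open>k < r\<close> False rest] Q(1) show False by simp
  qed
qed

lemma ex_colouring_without_mono_K:
  assumes n: "n \<ge> 3" and r: "r \<ge> 3" and G: "simple_graph V E" and c: "\<forall>e\<in>E. c e < r"
    and no_copy: "\<not> mono_copy (disj_union_verts (K_verts n) (K_verts (n - 1)))
                    (disj_union_edges (K_edges n) (K_edges (n - 1))) V E c"
  obtains c' where "\<forall>e\<in>E. c' e < r" and "\<not> mono_copy (K_verts n) (K_edges n) V E c'"
proof -
  obtain J S where J: "J \<subseteq> {..<r}"
    and S: "\<And>j. j \<in> J \<Longrightarrow> card (S j) = n \<and> mono_clique V E c j (S j)"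
    and small_out: "\<And>j B. j < r \<Longrightarrow> j \<notin> J \<Longrightarrow> mono_clique V E c j B \<Longrightarrow> card B < n"
    and small_in: "\<And>j B. j \<in> J \<Longrightarrow> mono_clique V E c j B \<Longrightarrow> B \<inter> S j = {} \<Longrightarrow> card B < n - 1"
    using mono_clique_selection[of n V E c r] n no_copy by auto
  define U where "U = (\<Union>j\<in>J. S j)"
  have "finite J" using J finite_subset by blast
  moreover have "finite (S j)" if "j \<in> J" for j using S[OF that] n by (intro card_ge_0_finite) simp
  ultimately have "finite U" unfolding U_def by blast
  have "card U \<le> (\<Sum>j\<in>J. card (S j))" unfolding U_def by (rule card_UN_le[OF \<open>finite J\<close>])
  also have "\<dots> = card J * n" using S by simp
  finally obtain col lab where lc: "labelled_colouring r n J U col lab"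
    using labelled_colouring_exists[OF n r \<open>finite U\<close> _ J] by blast
  have less: "\<forall>e\<in>E. recolour U col lab c e < r" using recolour_less[OF lc J G c] by blast
  have S_sub: "S j \<subseteq> U" if "j \<in> J" for j unfolding U_def using that by blast
  show ?thesis using that[OF less recolour_without_mono_K[OF n lc S_sub small_out small_in less]] .
qed

lemma is_ramsey_union_if_is_ramsey_K:
  assumes "n \<ge> 3" and "r \<ge> 3" and "simple_graph V E"
    and ramsey: "is_ramsey r (K_verts n) (K_edges n) V E"
  shows "is_ramsey r (disj_union_verts (K_verts n) (K_verts (n - 1)))
           (disj_union_edges (K_edges n) (K_edges (n - 1))) V E"
  unfolding is_ramsey_def
proof (intro allI impI)
  fix c :: "'a set \<Rightarrow> nat"
  assume c: "\<forall>e\<in>E. c e < r"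
  show "mono_copy (disj_union_verts (K_verts n) (K_verts (n - 1)))
      (disj_union_edges (K_edges n) (K_edges (n - 1))) V E c"
  proof (rule ccontr)
    assume "\<not> ?thesis"
    then obtain c' where "\<forall>e\<in>E. c' e < r" "\<not> mono_copy (K_verts n) (K_edges n) V E c'"
      using ex_colouring_without_mono_K assms(1-3) c by blast
    with ramsey show False unfolding is_ramsey_def by blast
  qed
qed

theorem mainTheorem1:
  fixes n r :: nat and V :: "'a set" and E :: "'a set set"
  assumes "n \<ge> 3" and "r \<ge> 3" and "simple_graph V E"
  shows "is_ramsey r (K_verts n) (K_edges n) V E \<longleftrightarrow>
         is_ramsey r (disj_union_verts (K_verts n) (K_verts (n - 1)))
                     (disj_union_edges (K_edges n) (K_edges (n - 1))) V E"
  using is_ramsey_union_if_is_ramsey_K[OF assms] is_ramsey_K_if_is_ramsey_union by blast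

end
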